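(* Any algorithm that estimates the maximum path cover size of an $n$-vertex graph within a constant multiplicative factor requires $\Omega(n^2)$ queries in the adjacency matrix model.
   Context: A path cover is a collection of vertex-disjoint simple paths; its size is the total number of edges, and the maximum path cover size is the maximum over all path covers. Estimating within a constant multiplicative factor $\gamma\in(0,1]$ means outputting $\tilde{\rho}$ with $\gamma\rho\le\tilde{\rho}\le\rho$. In the adjacency matrix model the algorithm may query, for any pair of vertices, whether they are adjacent. *)

theory Defs
  imports "HOL-Probability.Probability_Mass_Function"
begin

definition is_graph :: "nat \<Rightarrow> (nat \<Rightarrow> nat \<Rightarrow> bool) \<Rightarrow> bool" where
  "is_graph n E \<longleftrightarrow> (\<forall>u v. E u v \<longrightarrow> u < n \<and> v < n \<and> u \<noteq> v \<and> E v u)"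

definition is_path :: "nat \<Rightarrow> (nat \<Rightarrow> nat \<Rightarrow> bool) \<Rightarrow> nat list \<Rightarrow> bool" where
  "is_path n E p \<longleftrightarrow> p \<noteq> [] \<and> distinct p \<and> set p \<subseteq> {..<n} \<and>
     (\<forall>i. Suc i < length p \<longrightarrow> E (p ! i) (p ! Suc i))"

definition is_path_cover :: "nat \<Rightarrow> (nat \<Rightarrow> nat \<Rightarrow> bool) \<Rightarrow> nat list list \<Rightarrow> bool" where
  "is_path_cover n E P \<longleftrightarrow> (\<forall>p\<in>set P. is_path n E p) \<and>
     (\<forall>i j. i < length P \<longrightarrow> j < length P \<longrightarrow> i \<noteq> j \<longrightarrow> set (P ! i) \<inter> set (P ! j) = {})"

text \<open>Size of a path cover: total number of edges.\<close>
definition pc_size :: "nat list list \<Rightarrow> nat" where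
  "pc_size P = sum_list (map (\<lambda>p. length p - 1) P)"

definition max_path_cover :: "nat \<Rightarrow> (nat \<Rightarrow> nat \<Rightarrow> bool) \<Rightarrow> nat" where
  "max_path_cover n E = Max {pc_size P | P. is_path_cover n E P}"

text \<open>Deterministic query algorithms in the adjacency matrix model: decision trees.
  Query u v t f asks whether u,v are adjacent and continues with t (yes) or f (no);
  a leaf outputs a real estimate.\<close>
datatype qtree = Leaf real | Query nat nat qtree qtree

fun run :: "qtree \<Rightarrow> (nat \<Rightarrow> nat \<Rightarrow> bool) \<Rightarrow> real" where
  "run (Leaf r) E = r"
| "run (Query u v t f) E = (if E u v then run t E else run f E)"

fun nqueries :: "qtree \<Rightarrow> (nat \<Rightarrow> nat \<Rightarrow> bool) \<Rightarrow> nat" where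
  "nqueries (Leaf r) E = 0"
| "nqueries (Query u v t f) E = Suc (if E u v then nqueries t E else nqueries f E)"

text \<open>A randomized algorithm is a probability distribution over decision trees.\<close>
definition estimates_mpc :: "real \<Rightarrow> nat \<Rightarrow> qtree pmf \<Rightarrow> bool" where
  "estimates_mpc \<gamma> n A \<longleftrightarrow> (\<forall>E. is_graph n E \<longrightarrow>
     measure_pmf.prob A {t. \<gamma> * real (max_path_cover n E) \<le> run t E \<and>
                            run t E \<le> real (max_path_cover n E)} \<ge> 2/3)"

end

theory Submission
  imports Defs
begin

text \<open>An algorithm that estimates within factor \<gamma> > 0 must output 0 on the empty graph
  and at least \<gamma> on every graph with a single edge, since their maximum path covers have
  sizes 0 and 1. A decision tree that never queries the pair {u, v} behaves identically on
  the empty graph and on the graph with the single edge uv, so with probability at least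
  1/3 the algorithm queries {u, v} when run on the empty graph. Averaging over the
  n(n-1)/2 pairs yields a tree in the support that queries at least n(n-1)/6 \<ge> n^2/12
  of them on the empty graph.\<close>

fun queries :: "qtree \<Rightarrow> (nat \<Rightarrow> nat \<Rightarrow> bool) \<Rightarrow> (nat \<times> nat) list" where
  "queries (Leaf r) E = []"
| "queries (Query u v t f) E = (u, v) # (if E u v then queries t E else queries f E)"

lemma length_queries: "length (queries t E) = nqueries t E"
  by (induction t) auto

lemma run_cong_queries:
  assumes "\<And>a b. (a, b) \<in> set (queries t E) \<Longrightarrow> E a b = E' a b"
  shows "run t E = run t E'"
  using assms by (induction t) auto

definition empty_graph :: "nat \<Rightarrow> nat \<Rightarrow> bool" where
  "empty_graph = (\<lambda>_ _. False)"

definition edge_graph :: "nat \<Rightarrow> nat \<Rightarrow> nat \<Rightarrow> nat \<Rightarrow> bool" where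
  "edge_graph u v = (\<lambda>x y. (x = u \<and> y = v) \<or> (x = v \<and> y = u))"

lemma is_graph_empty_graph: "is_graph n empty_graph"
  by (simp add: is_graph_def empty_graph_def)

lemma is_graph_edge_graph: "u \<noteq> v \<Longrightarrow> u < n \<Longrightarrow> v < n \<Longrightarrow> is_graph n (edge_graph u v)"
  by (auto simp: is_graph_def edge_graph_def)

lemma max_path_cover_empty_graph: "max_path_cover n empty_graph = 0"
proof -
  have "pc_size P = 0" if "is_path_cover n empty_graph P" for P
  proof -
    have "length p \<le> 1" if "p \<in> set P" for p
      using \<open>is_path_cover n empty_graph P\<close> \<open>p \<in> set P\<close>
      by (force simp: is_path_cover_def is_path_def empty_graph_def dest: spec[of _ 0])
    then show ?thesis
      by (simp add: pc_size_def sum_list_eq_0_iff)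
  qed
  moreover have "is_path_cover n empty_graph []"
    by (simp add: is_path_cover_def)
  ultimately have "{pc_size P | P. is_path_cover n empty_graph P} = {0}"
    by (force simp: pc_size_def)
  then show ?thesis
    by (simp add: max_path_cover_def)
qed

lemma path_in_edge_graph:
  assumes "u \<noteq> v" and path: "is_path n (edge_graph u v) p" and "1 < length p"
  shows "length p = 2" and "u \<in> set p"
proof -
  have edge: "edge_graph u v (p ! i) (p ! Suc i)" if "Suc i < length p" for i
    using path that by (simp add: is_path_def)
  show "length p = 2"
  proof (rule ccontr)
    assume "length p \<noteq> 2"
    with \<open>1 < length p\<close> have "2 < length p" by linarith
    moreover from this have "p ! 0 \<noteq> p ! 2"
      using path by (simp add: is_path_def nth_eq_iff_index_eq)
    ultimately show False
      using edge[of 0] edge[of 1] \<open>u \<noteq> v\<close> by (auto simp: edge_graph_def numeral_2_eq_2)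
  qed
  then show "u \<in> set p"
    using edge[of 0] nth_mem[of 0 p] nth_mem[of 1 p] by (auto simp: edge_graph_def)
qed

text \<open>Every path with an edge passes through u, and the paths are disjoint.\<close>
lemma pc_size_edge_graph_le_1:
  assumes "u \<noteq> v" and cover: "is_path_cover n (edge_graph u v) P"
  shows "pc_size P \<le> 1"
proof -
  let ?through_u = "{i \<in> {..<length P}. u \<in> set (P ! i)}"
  have "pc_size P = (\<Sum>i<length P. length (P ! i) - 1)"
    by (simp add: pc_size_def sum_list_sum_nth atLeast0LessThan)
  also have "\<dots> \<le> (\<Sum>i<length P. if u \<in> set (P ! i) then 1 else 0)"
  proof (rule sum_mono)
    fix i assume "i \<in> {..<length P}"
    then have path: "is_path n (edge_graph u v) (P ! i)"
      using cover by (simp add: is_path_cover_def)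
    show "length (P ! i) - 1 \<le> (if u \<in> set (P ! i) then 1 else 0)"
      using path_in_edge_graph[OF \<open>u \<noteq> v\<close> path] by (cases "1 < length (P ! i)") auto
  qed
  also have "\<dots> = card ?through_u"
    by (simp add: sum.If_cases Int_def)
  also have "\<dots> \<le> 1"
    using cover by (auto simp: is_path_cover_def card_le_Suc0_iff_eq)
  finally show ?thesis .
qed

lemma max_path_cover_edge_graph:
  assumes "u \<noteq> v" "u < n" "v < n"
  shows "max_path_cover n (edge_graph u v) = 1"
proof -
  let ?sizes = "{pc_size P | P. is_path_cover n (edge_graph u v) P}"
  have "?sizes \<subseteq> {..1}"
    using pc_size_edge_graph_le_1[OF \<open>u \<noteq> v\<close>] by auto
  moreover have "is_path_cover n (edge_graph u v) [[u, v]]"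
    using assms by (auto simp: is_path_cover_def is_path_def edge_graph_def)
  then have "1 \<in> ?sizes"
    by (force simp: pc_size_def)
  ultimately show ?thesis
    unfolding max_path_cover_def by (meson Max_eqI atMost_iff finite_atMost finite_subset subsetD)
qed

lemma prob_Int_ge: "measure_pmf.prob A X + measure_pmf.prob A Y - 1 \<le> measure_pmf.prob A (X \<inter> Y)"
proof -
  have "measure_pmf.prob A (X \<union> Y) = measure_pmf.prob A X + measure_pmf.prob A (Y - X)"
    by (simp add: measure_pmf.finite_measure_Union')
  moreover have "measure_pmf.prob A (Y - X) = measure_pmf.prob A Y - measure_pmf.prob A (Y \<inter> X)"
    by (simp add: measure_pmf.finite_measure_Diff')
  moreover have "measure_pmf.prob A (X \<union> Y) \<le> 1"
    by simp
  ultimately show ?thesis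
    by (simp add: Int_commute)
qed

lemma prob_queries_distinguishing_pair_ge:
  assumes "measure_pmf.prob A {t. run t E \<in> S} \<ge> 2/3"
    and "measure_pmf.prob A {t. run t E' \<in> S'} \<ge> 2/3"
    and "S \<inter> S' = {}"
  shows "measure_pmf.prob A {t. \<exists>(a, b) \<in> set (queries t E). E a b \<noteq> E' a b} \<ge> 1/3"
proof -
  have "{t. run t E \<in> S} \<inter> {t. run t E' \<in> S'} \<subseteq> {t. \<exists>(a, b) \<in> set (queries t E). E a b \<noteq> E' a b}"
    using \<open>S \<inter> S' = {}\<close> run_cong_queries[of _ E E'] by fastforce
  then have "measure_pmf.prob A ({t. run t E \<in> S} \<inter> {t. run t E' \<in> S'})
      \<le> measure_pmf.prob A {t. \<exists>(a, b) \<in> set (queries t E). E a b \<noteq> E' a b}"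
    by (simp add: measure_pmf.finite_measure_mono)
  then show ?thesis
    using prob_Int_ge[of A "{t. run t E \<in> S}" "{t. run t E' \<in> S'}"] assms(1,2) by linarith
qed

lemma prob_queries_pair_ge:
  assumes "estimates_mpc \<gamma> n A" "0 < \<gamma>" "u \<noteq> v" "u < n" "v < n"
  shows "measure_pmf.prob A
    {t. (u, v) \<in> set (queries t empty_graph) \<or> (v, u) \<in> set (queries t empty_graph)} \<ge> 1/3"
proof -
  have estimate: "measure_pmf.prob A
      {t. run t E \<in> {\<gamma> * real (max_path_cover n E) .. real (max_path_cover n E)}} \<ge> 2/3"
    if "is_graph n E" for E
    using assms(1) that by (simp add: estimates_mpc_def)
  have "measure_pmf.prob A {t. run t empty_graph \<in> {0}} \<ge> 2/3"
    using estimate[OF is_graph_empty_graph] by (simp add: max_path_cover_empty_graph)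
  moreover have "measure_pmf.prob A {t. run t (edge_graph u v) \<in> {\<gamma>..1}} \<ge> 2/3"
    using estimate[OF is_graph_edge_graph[OF assms(3-5)]]
    by (simp add: max_path_cover_edge_graph[OF assms(3-5)])
  moreover have "{t. \<exists>(a, b) \<in> set (queries t empty_graph). empty_graph a b \<noteq> edge_graph u v a b}
      = {t. (u, v) \<in> set (queries t empty_graph) \<or> (v, u) \<in> set (queries t empty_graph)}"
    by (auto simp: empty_graph_def edge_graph_def)
  ultimately show ?thesis
    using prob_queries_distinguishing_pair_ge[of A empty_graph "{0}" "edge_graph u v" "{\<gamma>..1}"]
      \<open>0 < \<gamma>\<close> by auto
qed

lemma exists_set_pmf_in_many_events:
  fixes A :: "'a pmf" and Q :: "'b \<Rightarrow> 'a set"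
  assumes "finite P" and "\<And>e. e \<in> P \<Longrightarrow> p \<le> measure_pmf.prob A (Q e)"
  shows "\<exists>t \<in> set_pmf A. p * real (card P) \<le> real (card {e \<in> P. t \<in> Q e})"
proof (rule ccontr)
  define count where "count t = real (card {e \<in> P. t \<in> Q e})" for t
  have count_sum: "count = (\<lambda>t. \<Sum>e\<in>P. indicator (Q e) t)"
    using \<open>finite P\<close> by (auto simp: count_def indicator_def sum.If_cases Int_def)
  have integrable_indicator: "integrable A (indicator (Q e) :: 'a \<Rightarrow> real)" for e
    by (rule measure_pmf.integrable_const_bound[where B=1]) auto
  then have "integrable A count"
    by (simp add: count_sum)
  assume "\<not> ?thesis"
  then have "AE t in A. count t < p * real (card P)"
    by (auto simp: AE_measure_pmf_iff count_def)
  then have "measure_pmf.expectation A count < p * real (card P)"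
    using measure_pmf.integral_less_AE_space[OF \<open>integrable A count\<close>, of "\<lambda>_. p * real (card P)"]
    by simp
  also have "p * real (card P) \<le> (\<Sum>e\<in>P. measure_pmf.prob A (Q e))"
    using sum_mono[of P "\<lambda>_. p" "\<lambda>e. measure_pmf.prob A (Q e)"] assms(2) by (simp add: mult.commute)
  also have "\<dots> = measure_pmf.expectation A count"
    by (simp add: count_sum Bochner_Integration.integral_sum[OF integrable_indicator])
  finally show False
    by simp
qed

lemma card_le_length_if_unordered_pairs_in_list:
  fixes xs :: "(nat \<times> nat) list"
  assumes "\<forall>(v, u) \<in> S. u < v \<and> ((u, v) \<in> set xs \<or> (v, u) \<in> set xs)"
  shows "card S \<le> length xs"
proof -
  have "S \<subseteq> (\<lambda>(a, b). (max a b, min a b)) ` set xs"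
    using assms by (force simp: max_def min_def)
  then have "card S \<le> card (set xs)"
    by (meson List.finite_set card_image_le card_mono finite_imageI order_trans)
  then show ?thesis
    using card_length order_trans by blast
qed

lemma card_lower_pairs_ge:
  assumes "2 \<le> n"
  shows "real n ^ 2 / 4 \<le> real (card (SIGMA v:{..<n}. {..<v}))"
proof -
  have double_card: "2 * card (SIGMA v:{..<n}. {..<v}) = n * (n - 1)"
    by (induction n) (auto simp: algebra_simps)
  have "2 * real (card (SIGMA v:{..<n}. {..<v})) = real n * (real n - 1)"
    using arg_cong[OF double_card, of real] \<open>2 \<le> n\<close> by (simp add: of_nat_diff)
  moreover have "2 * real n \<le> real n * real n"
    using \<open>2 \<le> n\<close> by (intro mult_right_mono) auto
  ultimately show ?thesis
    unfolding power2_eq_square right_diff_distrib by linarith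
qed

theorem lemma11p7:
  fixes \<gamma> :: real
  assumes "0 < \<gamma>" and "\<gamma> \<le> 1"
  shows "\<exists>c > 0. \<exists>N. \<forall>n \<ge> N. \<forall>A :: qtree pmf. estimates_mpc \<gamma> n A \<longrightarrow>
           (\<exists>E. is_graph n E \<and> (\<exists>t \<in> set_pmf A. real (nqueries t E) \<ge> c * real n ^ 2))"
proof (intro exI[of _ "1/12"] conjI exI[of _ 2] allI impI)
  fix n :: nat and A :: "qtree pmf"
  assume "2 \<le> n" and estimates: "estimates_mpc \<gamma> n A"
  define pairs where "pairs = (SIGMA v:{..<n}. {..<v})"
  define queried where "queried = (\<lambda>(v, u). {t. (u, v) \<in> set (queries t empty_graph) \<or>
                                                (v, u) \<in> set (queries t empty_graph)})"
  have "finite pairs"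
    by (simp add: pairs_def)
  moreover have "1/3 \<le> measure_pmf.prob A (queried e)" if "e \<in> pairs" for e
    using that prob_queries_pair_ge[OF estimates \<open>0 < \<gamma>\<close>] by (auto simp: pairs_def queried_def)
  ultimately obtain t where "t \<in> set_pmf A"
    and many: "1/3 * real (card pairs) \<le> card {e \<in> pairs. t \<in> queried e}"
    using exists_set_pmf_in_many_events by blast
  have "card {e \<in> pairs. t \<in> queried e} \<le> nqueries t empty_graph"
    using card_le_length_if_unordered_pairs_in_list[where S = "{e \<in> pairs. t \<in> queried e}"
        and xs = "queries t empty_graph"]
    by (auto simp: pairs_def queried_def length_queries)
  moreover have "real n ^ 2 / 4 \<le> real (card pairs)"
    using card_lower_pairs_ge[OF \<open>2 \<le> n\<close>] by (simp add: pairs_def)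
  ultimately have "1/12 * real n ^ 2 \<le> real (nqueries t empty_graph)"
    using many by linarith
  then show "\<exists>E. is_graph n E \<and> (\<exists>t \<in> set_pmf A. 1/12 * real n ^ 2 \<le> real (nqueries t E))"
    using is_graph_empty_graph \<open>t \<in> set_pmf A\<close> by blast
qed (simp_all)

end
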